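(* Let $G$ be a graph of order $n$ with fair domination number $\gamma_f(G)$. Then $\mathcal{C}_f(G)\leq n-\gamma_f(G)+2$.
   Context: All graphs are finite and simple; $G=(V,E)$, $N(v)$ is the open neighborhood of $v$. A dominating set is $D\subseteq V$ such that every vertex of $V\setminus D$ has a neighbor in $D$. For an integer $k\geq 1$, a $k$-fair dominating set is a dominating set $D$ such that $|N(v)\cap D|=k$ for every $v\in V\setminus D$. A fair dominating set is a $k$-fair dominating set for some integer $k\geq 1$. The fair domination number $\gamma_f(G)$ is the minimum cardinality of a fair dominating set of $G$ if $G$ has an edge, and $\gamma_f(\overline{K_n})=n$ by convention. A fair coalition consists of two disjoint sets $A_1,A_2\subseteq V$, neither of which is a fair dominating set, such that $A_1\cup A_2$ is a fair dominating set. A fair coalition partition ($fc$-partition) of $G$ is a partition $\Upsilon=\{A_1,\dots,A_k\}$ of $V$ such that every $A_i$ is either a singleton fair dominating set of $G$, or is not a fair dominating set and forms a fair coalition with some other non-fair-dominating set $A_j\in\Upsilon$. The fair coalition number $\mathcal{C}_f(G)$ is the maximum number of parts of an $fc$-partition of $G$. *)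

theory Defs
  imports Main
begin

definition graph :: "'a set \<Rightarrow> ('a \<Rightarrow> 'a \<Rightarrow> bool) \<Rightarrow> bool" where
  "graph V E \<longleftrightarrow> finite V \<and> (\<forall>u v. E u v \<longrightarrow> u \<in> V \<and> v \<in> V)
     \<and> (\<forall>u v. E u v \<longrightarrow> E v u) \<and> (\<forall>v. \<not> E v v)"

definition nbhd :: "'a set \<Rightarrow> ('a \<Rightarrow> 'a \<Rightarrow> bool) \<Rightarrow> 'a \<Rightarrow> 'a set" where
  "nbhd V E v = {u \<in> V. E v u}"

definition dominating :: "'a set \<Rightarrow> ('a \<Rightarrow> 'a \<Rightarrow> bool) \<Rightarrow> 'a set \<Rightarrow> bool" where
  "dominating V E D \<longleftrightarrow> D \<subseteq> V \<and> (\<forall>v \<in> V - D. \<exists>u \<in> D. E v u)"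

definition k_fair_dom :: "'a set \<Rightarrow> ('a \<Rightarrow> 'a \<Rightarrow> bool) \<Rightarrow> nat \<Rightarrow> 'a set \<Rightarrow> bool" where
  "k_fair_dom V E k D \<longleftrightarrow> dominating V E D \<and> (\<forall>v \<in> V - D. card (nbhd V E v \<inter> D) = k)"

definition fair_dom :: "'a set \<Rightarrow> ('a \<Rightarrow> 'a \<Rightarrow> bool) \<Rightarrow> 'a set \<Rightarrow> bool" where
  "fair_dom V E D \<longleftrightarrow> (\<exists>k \<ge> 1. k_fair_dom V E k D)"

definition fair_domination_number :: "'a set \<Rightarrow> ('a \<Rightarrow> 'a \<Rightarrow> bool) \<Rightarrow> nat" where
  "fair_domination_number V E =
     (if \<exists>u \<in> V. \<exists>v \<in> V. E u v then Min {card D | D. fair_dom V E D} else card V)"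

definition fair_coalition :: "'a set \<Rightarrow> ('a \<Rightarrow> 'a \<Rightarrow> bool) \<Rightarrow> 'a set \<Rightarrow> 'a set \<Rightarrow> bool" where
  "fair_coalition V E A1 A2 \<longleftrightarrow> A1 \<subseteq> V \<and> A2 \<subseteq> V \<and> A1 \<inter> A2 = {}
     \<and> \<not> fair_dom V E A1 \<and> \<not> fair_dom V E A2 \<and> fair_dom V E (A1 \<union> A2)"

definition is_partition :: "'a set \<Rightarrow> 'a set set \<Rightarrow> bool" where
  "is_partition V P \<longleftrightarrow> \<Union>P = V \<and> (\<forall>A \<in> P. A \<noteq> {})
     \<and> (\<forall>A \<in> P. \<forall>B \<in> P. A \<noteq> B \<longrightarrow> A \<inter> B = {})"

definition fc_partition :: "'a set \<Rightarrow> ('a \<Rightarrow> 'a \<Rightarrow> bool) \<Rightarrow> 'a set set \<Rightarrow> bool" where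
  "fc_partition V E P \<longleftrightarrow> is_partition V P \<and>
     (\<forall>A \<in> P. (card A = 1 \<and> fair_dom V E A) \<or>
              (\<not> fair_dom V E A \<and> (\<exists>B \<in> P. B \<noteq> A \<and> fair_coalition V E A B)))"

text \<open>Maximum number of parts of an fc-partition (Sup of nat; 0 if none exists).\<close>
definition fair_coalition_number :: "'a set \<Rightarrow> ('a \<Rightarrow> 'a \<Rightarrow> bool) \<Rightarrow> nat" where
  "fair_coalition_number V E = Sup {card P | P. fc_partition V E P}"

end

theory Submission
  imports Defs
begin

text \<open>If one part of an fc-partition is a singleton fair dominating set, then
  \<open>\<gamma>\<^sub>f(G) \<le> 1\<close> and the bound is just \<open>|\<Upsilon>| \<le> n\<close>. Otherwise some part \<open>A\<close> forms a fair
  coalition with another part \<open>B\<close>, so \<open>|A \<union> B| \<ge> \<gamma>\<^sub>f(G)\<close>, and the remaining parts are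
  nonempty and disjoint inside \<open>V - (A \<union> B)\<close>; hence there are at most
  \<open>n - \<gamma>\<^sub>f(G)\<close> of them besides \<open>A\<close> and \<open>B\<close>.\<close>

lemma card_le_card_Union_disjoint:
  assumes "finite (\<Union>P)" "{} \<notin> P" "pairwise disjnt P"
  shows "card P \<le> card (\<Union>P)"
proof -
  have finite_parts: "\<And>A. A \<in> P \<Longrightarrow> finite A"
    using assms(1) by (meson Sup_upper finite_subset)
  have "card P = (\<Sum>A\<in>P. 1)" by simp
  also have "\<dots> \<le> sum card P"
    using assms(2) finite_parts by (intro sum_mono) (metis One_nat_def Suc_leI card_gt_0_iff)
  also have "\<dots> = card (\<Union>P)"
    using assms(3) finite_parts by (rule card_Union_disjoint[symmetric])
  finally show ?thesis .
qed

lemma fair_dom_subset: "fair_dom V E D \<Longrightarrow> D \<subseteq> V"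
  unfolding fair_dom_def k_fair_dom_def dominating_def by auto

lemma fair_domination_number_le_card:
  assumes "graph V E" and "fair_dom V E D"
  shows "fair_domination_number V E \<le> card D"
proof (cases "\<exists>u \<in> V. \<exists>v \<in> V. E u v")
  case True
  have "{card D | D. fair_dom V E D} \<subseteq> card ` Pow V"
    using fair_dom_subset by blast
  then have "finite {card D | D. fair_dom V E D}"
    using assms(1) unfolding graph_def by (meson finite_Pow_iff finite_imageI finite_subset)
  moreover have "card D \<in> {card D | D. fair_dom V E D}" using assms(2) by blast
  ultimately show ?thesis
    using True by (simp add: fair_domination_number_def)
next
  case False
  \<comment> \<open>without edges only \<open>V\<close> itself dominates\<close>
  have "V \<subseteq> D"
  proof
    fix v assume "v \<in> V"
    show "v \<in> D"
    proof (rule ccontr)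
      assume "v \<notin> D"
      then obtain u where "u \<in> D" "E v u"
        using \<open>v \<in> V\<close> assms(2) unfolding fair_dom_def k_fair_dom_def dominating_def by blast
      then show False
        using False \<open>v \<in> V\<close> fair_dom_subset[OF assms(2)] by blast
    qed
  qed
  then have "D = V" using fair_dom_subset[OF assms(2)] by blast
  then show ?thesis using False by (simp add: fair_domination_number_def)
qed

lemma card_fc_partition_le:
  assumes G: "graph V E" and P: "fc_partition V E P"
  shows "card P \<le> card V - fair_domination_number V E + 2"
proof -
  have "finite V" using G by (simp add: graph_def)
  have union: "\<Union>P = V" and nonempty: "{} \<notin> P" and disjoint: "pairwise disjnt P"
    using P unfolding fc_partition_def is_partition_def pairwise_def disjnt_def by auto
  have card_P_le: "card P \<le> card V"
    using card_le_card_Union_disjoint[OF _ nonempty disjoint] union \<open>finite V\<close> by simp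
  show ?thesis
  proof (cases "P = {}")
    case False
    then obtain A where "A \<in> P" by blast
    then consider "card A = 1" "fair_dom V E A"
      | B where "B \<in> P" "B \<noteq> A" "fair_dom V E (A \<union> B)"
      using P unfolding fc_partition_def fair_coalition_def by blast
    then show ?thesis
    proof cases
      case 1
      then have "fair_domination_number V E \<le> 1"
        using fair_domination_number_le_card[OF G] by metis
      then show ?thesis using card_P_le by linarith
    next
      case (2 B)
      have "A \<union> B \<subseteq> V" using \<open>A \<in> P\<close> \<open>B \<in> P\<close> union by blast
      let ?Q = "P - {A, B}"
      have "\<Union>?Q \<subseteq> V - (A \<union> B)"
        using union disjoint \<open>A \<in> P\<close> \<open>B \<in> P\<close> by (auto simp: pairwise_def disjnt_def)
      then have "card ?Q \<le> card (V - (A \<union> B))"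
        using card_le_card_Union_disjoint[of ?Q] nonempty disjoint \<open>finite V\<close>
        by (meson Diff_subset card_mono finite_Diff finite_subset order_trans pairwise_subset
            subset_iff)
      also have "\<dots> = card V - card (A \<union> B)"
        using \<open>A \<union> B \<subseteq> V\<close> \<open>finite V\<close> by (meson card_Diff_subset finite_subset)
      also have "\<dots> \<le> card V - fair_domination_number V E"
        using fair_domination_number_le_card[OF G 2(3)] by simp
      finally show ?thesis
        using \<open>A \<in> P\<close> \<open>B \<in> P\<close> \<open>B \<noteq> A\<close> by (simp add: card_Diff_subset)
    qed
  qed simp
qed

theorem theorem2p7:
  fixes V :: "'a set" and E :: "'a \<Rightarrow> 'a \<Rightarrow> bool"
  assumes "graph V E"
  shows "fair_coalition_number V E \<le> card V - fair_domination_number V E + 2"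
proof (cases "{card P | P. fc_partition V E P} = {}")
  case False
  then show ?thesis
    unfolding fair_coalition_number_def
    using card_fc_partition_le[OF assms] by (auto intro: cSup_least)
qed (simp add: fair_coalition_number_def)

end
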